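(* In the Cucker–Smale setting below, for all $n\in\mathbb{N}_0$, $$d_V(t_{2n+2})\le\frac{e^{\tilde K(t_{2n+2}-t_{2n+1})}}{2-e^{\tilde K(t_{2n+2}-t_{2n+1})}}\,d_V(t_{2n+1}).$$
   Context: Setting: $N\ge2$; $\tilde\psi:\mathbb{R}\to\mathbb{R}$ positive, bounded, continuous, with $\tilde K:=\|\tilde\psi\|_\infty$ and $\int_0^\infty\min_{r\in[0,x]}\tilde\psi(r)dx=+\infty$; $\{t_n\}_{n\in\mathbb{N}_0}$ increasing, nonnegative, $t_0=0$, $t_n\to\infty$, with $t_{2n+2}-t_{2n+1}<\frac{\ln2}{\tilde K}$ and $t_{2n+1}-t_{2n}>\frac1{\tilde K}$ for all $n$, and $\sum_{p\ge0}\ln\frac{e^{\tilde K(t_{2p+2}-t_{2p+1})}}{2-e^{\tilde K(t_{2p+2}-t_{2p+1})}}<\infty$. $\alpha(0)=1$, $\alpha=1$ on $(t_{2n},t_{2n+1})$, $\alpha=-1$ on $[t_{2n+1},t_{2n+2}]$. $\{(x_i,v_i)\}$ solves $x_i'=v_i$, $v_i'(t)=\frac1{N-1}\sum_{j\ne i}\alpha(t)\tilde\psi(|x_i(t)-x_j(t)|)(v_j(t)-v_i(t))$, $t>0$, with given initial data in $\mathbb{R}^d$ (continuous, $C^1$ on each $(t_n,t_{n+1})$). $d_V(t):=\max_{i,j}|v_i(t)-v_j(t)|$. *)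

theory Defs
  imports "HOL-Analysis.Analysis"
begin

definition dV :: "nat \<Rightarrow> (nat \<Rightarrow> real \<Rightarrow> 'a::real_normed_vector) \<Rightarrow> real \<Rightarrow> real" where
  "dV N v t = Max {norm (v i t - v j t) | i j. i < N \<and> j < N}"

end

theory Submission
  imports Defs
begin

text \<open>While \<open>|\<alpha>| \<le> 1\<close>, every acceleration is a mean of terms \<open>\<alpha> \<psi> (v_j - v_i)\<close>, hence bounded
  by K d_V, so each relative velocity changes at rate at most 2 K d_V. At the first time some pair
  reaches the barrier (d_V(a) + \<epsilon>) e^{2K(t-a)}, the vector mean value inequality for that pair
  gives a contradiction; hence d_V(b) \<le> y^2 d_V(a) with y = e^{K(b-a)} on [a, b] = [t_{2n+1}, t_{2n+2}].
  Since b - a < ln 2 / K we have 0 < y < 2, and then y^2 \<le> y / (2 - y).\<close>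

lemma first_reaching_time:
  fixes f :: "'i \<Rightarrow> real \<Rightarrow> real"
  assumes "finite P"
    and f_cont: "\<And>p. p \<in> P \<Longrightarrow> continuous_on {a..b} (f p)"
    and g_cont: "continuous_on {a..b} g"
    and below_at_start: "\<And>p. p \<in> P \<Longrightarrow> f p a < g a"
    and reached: "p\<^sub>0 \<in> P" "t\<^sub>0 \<in> {a..b}" "g t\<^sub>0 \<le> f p\<^sub>0 t\<^sub>0"
  obtains s p where "a < s" "s \<le> b" "p \<in> P" "g s \<le> f p s"
    and "\<And>q r. q \<in> P \<Longrightarrow> a \<le> r \<Longrightarrow> r < s \<Longrightarrow> f q r < g r"
proof -
  define C where "C = (\<Union>p\<in>P. {t \<in> {a..b}. g t \<le> f p t})"
  have "C \<noteq> {}"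
    using reached unfolding C_def by blast
  moreover have C_bdd: "bdd_below C"
    unfolding C_def by (rule bdd_belowI[of _ a]) auto
  moreover have "closed C"
    unfolding C_def using assms by (intro closed_UN ballI continuous_on_closed_Collect_le) auto
  ultimately have "Inf C \<in> C"
    by (rule closed_contains_Inf)
  then obtain p where p: "p \<in> P" "a \<le> Inf C" "Inf C \<le> b" "g (Inf C) \<le> f p (Inf C)"
    unfolding C_def by auto
  have before: "f q r < g r" if "q \<in> P" "a \<le> r" "r < Inf C" for q r
  proof (rule ccontr)
    assume "\<not> f q r < g r"
    with that p have "r \<in> C" unfolding C_def by (auto simp: not_less)
    with C_bdd have "Inf C \<le> r" by (rule cInf_lower[rotated])
    with \<open>r < Inf C\<close> show False by simp
  qed
  have "a \<noteq> Inf C"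
    using p below_at_start[of p] by auto
  with p before show thesis
    by (intro that[of "Inf C" p]) auto
qed

lemma pairwise_diff_less_exp_growth:
  fixes v F :: "nat \<Rightarrow> real \<Rightarrow> 'a::real_normed_vector"
  assumes v_cont: "\<And>i. i < N \<Longrightarrow> continuous_on {a..b} (v i)"
    and v_deriv: "\<And>i t. i < N \<Longrightarrow> a < t \<Longrightarrow> t < b \<Longrightarrow> (v i has_vector_derivative F i t) (at t)"
    and F_bound: "\<And>i t M. i < N \<Longrightarrow> a < t \<Longrightarrow> t < b \<Longrightarrow>
                    (\<forall>j<N. norm (v j t - v i t) \<le> M) \<Longrightarrow> norm (F i t) \<le> K * M"
    and initial: "\<And>i j. i < N \<Longrightarrow> j < N \<Longrightarrow> norm (v i a - v j a) \<le> D"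
    and "\<epsilon> > 0" "i < N" "j < N" "t \<in> {a..b}"
  shows "norm (v i t - v j t) < (D + \<epsilon>) * exp (2 * K * (t - a))"
proof (rule ccontr)
  define \<phi> where "\<phi> t = (D + \<epsilon>) * exp (2 * K * (t - a))" for t
  define P where "P = {..<N} \<times> {..<N}"
  define f where "f p t = norm (v (fst p) t - v (snd p) t)" for p t
  have \<phi>_deriv: "(\<phi> has_vector_derivative 2 * K * \<phi> t) (at t)" for t
    unfolding \<phi>_def has_real_derivative_iff_has_vector_derivative[symmetric]
    by (auto intro!: derivative_eq_intros)
  have \<phi>_cont: "continuous_on S \<phi>" for S
    unfolding \<phi>_def by (intro continuous_intros)
  assume "\<not> norm (v i t - v j t) < (D + \<epsilon>) * exp (2 * K * (t - a))"
  then have "\<phi> t \<le> f (i, j) t"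
    unfolding \<phi>_def f_def by simp
  moreover have "f p a < \<phi> a" if "p \<in> P" for p
    using that initial[of "fst p" "snd p"] \<open>\<epsilon> > 0\<close> unfolding P_def f_def \<phi>_def by auto
  moreover have "continuous_on {a..b} (f p)" if "p \<in> P" for p
    using that v_cont[of "fst p"] v_cont[of "snd p"] unfolding P_def f_def
    by (auto intro!: continuous_on_norm continuous_on_diff)
  ultimately obtain s p where s: "a < s" "s \<le> b" "p \<in> P" "\<phi> s \<le> f p s"
    and before: "\<And>q r. q \<in> P \<Longrightarrow> a \<le> r \<Longrightarrow> r < s \<Longrightarrow> f q r < \<phi> r"
    using first_reaching_time[where P=P and f=f and g=\<phi> and p\<^sub>0="(i, j)"] \<phi>_cont
      \<open>i < N\<close> \<open>j < N\<close> \<open>t \<in> {a..b}\<close>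
    unfolding P_def by blast
  obtain k l where kl: "p = (k, l)" "k < N" "l < N"
    using \<open>p \<in> P\<close> unfolding P_def by auto
  have F_before: "norm (F m r) \<le> K * \<phi> r" if "m < N" "a < r" "r < s" for m r
    using that s before[of "(_, m)" r] by (intro F_bound) (auto simp: P_def f_def less_imp_le)
  have "norm ((v k s - v l s) - (v k a - v l a)) \<le> \<phi> s - \<phi> a"
  proof (rule differentiable_bound_general[OF \<open>a < s\<close>])
    have "continuous_on {a..s} (v m)" if "m < N" for m
      using v_cont[OF that] by (rule continuous_on_subset) (use s in auto)
    then show "continuous_on {a..s} (\<lambda>r. v k r - v l r)"
      using kl by (intro continuous_intros) auto
    fix r assume r: "a < r" "r < s"
    then show "((\<lambda>r. v k r - v l r) has_vector_derivative F k r - F l r) (at r)"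
      using kl s v_deriv by (intro has_vector_derivative_diff) auto
    show "norm (F k r - F l r) \<le> 2 * K * \<phi> r"
      using norm_triangle_ineq4[of "F k r" "F l r"] F_before[of k r] F_before[of l r] kl r by simp
  qed (auto intro: \<phi>_cont \<phi>_deriv)
  then have "f p s \<le> norm (v k a - v l a) + \<phi> s - \<phi> a"
    using norm_triangle_ineq2[of "v k s - v l s" "v k a - v l a"] unfolding kl f_def by simp
  also have "\<dots> < \<phi> s"
    using initial[OF kl(2,3)] \<open>\<epsilon> > 0\<close> unfolding \<phi>_def by simp
  finally show False
    using s by simp
qed

lemma norm_diff_le_dV:
  assumes "i < N" "j < N"
  shows "norm (v i t - v j t) \<le> dV N v t"
  unfolding dV_def using assms by (intro Max_ge finite_image_set2) auto

lemma dV_le: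
  assumes "0 < N" "\<And>i j. i < N \<Longrightarrow> j < N \<Longrightarrow> norm (v i t - v j t) \<le> B"
  shows "dV N v t \<le> B"
  unfolding dV_def using assms by (subst Max_le_iff) (auto intro: finite_image_set2)

lemma dV_le_exp_growth:
  fixes v F :: "nat \<Rightarrow> real \<Rightarrow> 'a::real_normed_vector"
  assumes "0 < N"
    and v_cont: "\<And>i. i < N \<Longrightarrow> continuous_on {a..b} (v i)"
    and v_deriv: "\<And>i t. i < N \<Longrightarrow> a < t \<Longrightarrow> t < b \<Longrightarrow> (v i has_vector_derivative F i t) (at t)"
    and F_bound: "\<And>i t M. i < N \<Longrightarrow> a < t \<Longrightarrow> t < b \<Longrightarrow>
                    (\<forall>j<N. norm (v j t - v i t) \<le> M) \<Longrightarrow> norm (F i t) \<le> K * M"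
    and "t \<in> {a..b}"
  shows "dV N v t \<le> exp (2 * K * (t - a)) * dV N v a"
proof (rule dV_le[OF \<open>0 < N\<close>])
  fix i j assume ij: "i < N" "j < N"
  let ?E = "exp (2 * K * (t - a))"
  show "norm (v i t - v j t) \<le> ?E * dV N v a"
  proof (rule field_le_epsilon)
    fix e :: real assume "e > 0"
    have "norm (v i t - v j t) < (dV N v a + e / ?E) * ?E"
      by (rule pairwise_diff_less_exp_growth[OF v_cont v_deriv F_bound
            norm_diff_le_dV[where v=v and t=a] _ ij \<open>t \<in> {a..b}\<close>]) (use \<open>e > 0\<close> in auto)
    also have "\<dots> = ?E * dV N v a + e"
      by (simp add: field_simps)
    finally show "norm (v i t - v j t) \<le> ?E * dV N v a + e"
      by simp
  qed
qed

lemma norm_mean_weighted_diff_le: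
  fixes v :: "nat \<Rightarrow> 'a::real_normed_vector"
  assumes "N \<ge> 2" "i < N"
    and weights: "\<And>j. j < N \<Longrightarrow> \<bar>w j\<bar> \<le> K"
    and spread: "\<forall>j<N. norm (v j - v i) \<le> M"
  shows "norm ((1 / (real N - 1)) *\<^sub>R (\<Sum>j\<in>{j. j < N \<and> j \<noteq> i}. w j *\<^sub>R (v j - v i))) \<le> K * M"
proof -
  have "K \<ge> 0"
    using weights[of i] \<open>i < N\<close> by linarith
  have "norm (\<Sum>j\<in>{j. j < N \<and> j \<noteq> i}. w j *\<^sub>R (v j - v i))
        \<le> (\<Sum>j\<in>{j. j < N \<and> j \<noteq> i}. \<bar>w j\<bar> * norm (v j - v i))"
    by (rule norm_sum[THEN order_trans]) simp
  also have "\<dots> \<le> (\<Sum>j\<in>{j. j < N \<and> j \<noteq> i}. K * M)"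
    using weights spread \<open>K \<ge> 0\<close> by (intro sum_mono mult_mono) auto
  also have "\<dots> = (real N - 1) * (K * M)"
  proof -
    have "{j. j < N \<and> j \<noteq> i} = {..<N} - {i}" by auto
    then show ?thesis using assms(1,2) by simp
  qed
  finally show ?thesis
    using \<open>N \<ge> 2\<close> by (simp add: field_simps)
qed

lemma exp_double_le_ratio:
  fixes s :: real
  assumes "s < ln 2"
  shows "exp (2 * s) \<le> exp s / (2 - exp s)"
proof -
  define y where "y = exp s"
  have "0 < y" "y < 2"
    using assms unfolding y_def by (auto simp: exp_less_cancel_iff[of s "ln 2", symmetric])
  have "y - y\<^sup>2 * (2 - y) = y * (y - 1)\<^sup>2"
    by (simp add: algebra_simps power2_eq_square)
  then have "y\<^sup>2 * (2 - y) \<le> y"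
    using \<open>0 < y\<close> by (smt (verit) zero_le_mult_iff zero_le_power2)
  then show ?thesis
    using \<open>y < 2\<close> unfolding y_def by (simp add: field_simps power2_eq_square flip: exp_add)
qed

lemma dV_cucker_smale_le_exp_growth:
  fixes x v :: "nat \<Rightarrow> real \<Rightarrow> 'a::real_normed_vector"
  assumes "N \<ge> 2" "a \<le> b"
    and psi_bounds: "\<And>r. 0 \<le> psi r \<and> psi r \<le> K"
    and alpha_bound: "\<And>t. a < t \<Longrightarrow> t < b \<Longrightarrow> \<bar>alpha t\<bar> \<le> 1"
    and v_cont: "\<And>i. i < N \<Longrightarrow> continuous_on {a..b} (v i)"
    and v_ode: "\<And>i t. i < N \<Longrightarrow> a < t \<Longrightarrow> t < b \<Longrightarrow>
                  (v i has_vector_derivative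
                     ((1 / (real N - 1)) *\<^sub>R
                       (\<Sum>j\<in>{j. j < N \<and> j \<noteq> i}.
                          (alpha t * psi (norm (x i t - x j t))) *\<^sub>R (v j t - v i t)))) (at t)"
  shows "dV N v b \<le> exp (2 * K * (b - a)) * dV N v a"
proof (rule dV_le_exp_growth[OF _ v_cont v_ode])
  fix i t M
  assume "i < N" "a < t" "t < b" "\<forall>j<N. norm (v j t - v i t) \<le> M"
  then show "norm ((1 / (real N - 1)) *\<^sub>R (\<Sum>j\<in>{j. j < N \<and> j \<noteq> i}.
               (alpha t * psi (norm (x i t - x j t))) *\<^sub>R (v j t - v i t))) \<le> K * M"
    using alpha_bound psi_bounds
    by (intro norm_mean_weighted_diff_le[OF \<open>N \<ge> 2\<close>])
       (auto simp: abs_mult intro: mult_le_one[THEN order_trans] mult_mono[of _ 1 _ K, simplified])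
qed (use assms in auto)

theorem lemma7p10:
  fixes N :: nat
    and psi :: "real \<Rightarrow> real"
    and K :: real
    and ts :: "nat \<Rightarrow> real"
    and alpha :: "real \<Rightarrow> real"
    and x v :: "nat \<Rightarrow> real \<Rightarrow> real ^ 'd"
  assumes N2: "N \<ge> 2"
    and psi_pos: "\<And>r. psi r > 0"
    and psi_bdd: "bdd_above (range psi)"
    and psi_cont: "continuous_on UNIV psi"
    and K_def: "K = (SUP r. psi r)"
    and psi_int: "filterlim (\<lambda>X. integral {0..X} (\<lambda>s. Inf (psi ` {0..s}))) at_top at_top"
    and ts_mono: "strict_mono ts"
    and ts0: "ts 0 = 0"
    and ts_lim: "filterlim ts at_top sequentially"
    and ts_short: "\<And>n. ts (2*n+2) - ts (2*n+1) < ln 2 / K"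
    and ts_long: "\<And>n. ts (2*n+1) - ts (2*n) > 1 / K"
    and ts_sum: "summable (\<lambda>p. ln (exp (K * (ts (2*p+2) - ts (2*p+1)))
                                   / (2 - exp (K * (ts (2*p+2) - ts (2*p+1))))))"
    and alpha0: "alpha 0 = 1"
    and alpha_pos: "\<And>n t. ts (2*n) < t \<Longrightarrow> t < ts (2*n+1) \<Longrightarrow> alpha t = 1"
    and alpha_neg: "\<And>n t. ts (2*n+1) \<le> t \<Longrightarrow> t \<le> ts (2*n+2) \<Longrightarrow> alpha t = -1"
    and x_cont: "\<And>i. i < N \<Longrightarrow> continuous_on {0..} (x i)"
    and v_cont: "\<And>i. i < N \<Longrightarrow> continuous_on {0..} (v i)"
    and x_ode: "\<And>i n t. i < N \<Longrightarrow> ts n < t \<Longrightarrow> t < ts (Suc n) \<Longrightarrow>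
                  (x i has_vector_derivative v i t) (at t)"
    and v_ode: "\<And>i n t. i < N \<Longrightarrow> ts n < t \<Longrightarrow> t < ts (Suc n) \<Longrightarrow>
                  (v i has_vector_derivative
                     ((1 / (real N - 1)) *\<^sub>R
                       (\<Sum>j\<in>{j. j < N \<and> j \<noteq> i}.
                          (alpha t * psi (norm (x i t - x j t))) *\<^sub>R (v j t - v i t)))) (at t)"
  shows "\<forall>n. dV N v (ts (2*n+2))
            \<le> exp (K * (ts (2*n+2) - ts (2*n+1))) / (2 - exp (K * (ts (2*n+2) - ts (2*n+1))))
               * dV N v (ts (2*n+1))"
proof
  fix n
  define a where "a = ts (2*n+1)"
  define b where "b = ts (2*n+2)"
  have psi_le_K: "psi r \<le> K" for r
    unfolding K_def using psi_bdd by (simp add: cSUP_upper)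
  have "0 \<le> a" "a \<le> b"
    using strict_monoD[OF ts_mono, of 0 "2*n+1"] strict_monoD[OF ts_mono, of "2*n+1" "2*n+2"] ts0
    unfolding a_def b_def by simp_all
  have "dV N v b \<le> exp (2 * (K * (b - a))) * dV N v a"
  proof (rule dV_cucker_smale_le_exp_growth[OF N2 \<open>a \<le> b\<close>, simplified mult.assoc])
    show "0 \<le> psi r \<and> psi r \<le> K" for r
      using psi_pos[of r] psi_le_K[of r] by simp
    show "\<bar>alpha t\<bar> \<le> 1" if "a < t" "t < b" for t
      using alpha_neg[of n t] that unfolding a_def b_def by simp
    show "continuous_on {a..b} (v i)" if "i < N" for i
      using v_cont[OF that] by (rule continuous_on_subset) (use \<open>0 \<le> a\<close> in auto)
  qed (use v_ode[of _ "2*n+1"] in \<open>simp add: a_def b_def\<close>)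
  also have "\<dots> \<le> exp (K * (b - a)) / (2 - exp (K * (b - a))) * dV N v a"
  proof (intro mult_right_mono exp_double_le_ratio)
    have "K > 0"
      using psi_le_K[of 0] psi_pos[of 0] by linarith
    then show "K * (b - a) < ln 2"
      using ts_short[of n] unfolding a_def b_def by (simp add: field_simps)
    show "0 \<le> dV N v a"
      using norm_diff_le_dV[of 0 N 0 v a] N2 by simp
  qed
  finally show "dV N v (ts (2*n+2)) \<le> exp (K * (ts (2*n+2) - ts (2*n+1)))
      / (2 - exp (K * (ts (2*n+2) - ts (2*n+1)))) * dV N v (ts (2*n+1))"
    unfolding a_def b_def .
qed

end
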